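(* The graded linear map $\mathsf{IG}(q^{-1})\to\mathsf{cf}(\mathrm{UT}_\bullet)$ defined by $\mathrm{inc}(\pi)\mapsto\overline{\delta}_\pi$ for $\pi\in\mathcal{NO}_n$, $n\ge0$, is an injective Hopf algebra homomorphism.
   Context: Fix the finite field $\mathbb{F}_q$; $[n]=\{1,\dots,n\}$. $\mathrm{UT}_n$ is the group of $n\times n$ unipotent upper triangular matrices over $\mathbb{F}_q$. A natural unit interval order of $[n]$ is a partial order $\pi\subseteq[n]\times[n]$ (reflexive, antisymmetric, transitive relation) with $(i,j)\in\pi\Rightarrow i\le j$, such that for every $(j,k)\in\pi$ with $j\ne k$, all $(i,l)$ with $i\le j$ and $k\le l$ lie in $\pi$; $\mathcal{NO}_n$ is the set of these. For such $\pi$, $\mathrm{UT}(\pi)=\{g\in\mathrm{UT}_n:(g-1_n)_{i,j}\ne0\text{ only if }(i,j)\in\pi\}$ (a normal subgroup) and $\overline{\delta}_\pi\in\mathsf{cf}(\mathrm{UT}_n)$ is its indicator function. Hopf algebra $\mathsf{cf}(\mathrm{UT}_\bullet)=\bigoplus_n\mathsf{cf}(\mathrm{UT}_n)$ ($\mathsf{cf}$ = complex class functions): for $I\subseteq[n]$, $I^c=[n]\setminus I$, let $\mathrm{UL}_I=\{g\in\mathrm{UT}_n:(g-1_n)_{i,j}\ne0\text{ only if }(i,j)\in I\times I\cup I^c\times I^c\}$, $\mathrm{UR}_I=\{g:(g-1_n)_{i,j}\ne0\text{ only if }(i,j)\in I\times I^c\}$, $\mathrm{UP}_I=\{g:(g-1_n)_{i,j}=0\text{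 for }(i,j)\in I^c\times I\}=\mathrm{UL}_I\ltimes\mathrm{UR}_I$ ($\mathrm{UP}_{[i]}=\mathrm{UT}_n$). With $\mathrm{cano}_I:I\to[|I|]$ order-preserving, $\mathrm{UL}_I\cong\mathrm{UT}_{|I|}\times\mathrm{UT}_{|I^c|}$ by relabelling blocks, inducing $\mathrm{st}_{(I,I^c)}:\mathsf{cf}(\mathrm{UL}_I)\to\mathsf{cf}(\mathrm{UT}_{|I|})\otimes\mathsf{cf}(\mathrm{UT}_{|I^c|})$. Product $\mu=\bigoplus_{n\ge i\ge0}\mathrm{Inf}^{\mathrm{UT}_n}_{\mathrm{UL}_{[i]}}\circ\mathrm{st}^{-1}_{([i],[i]^c)}$ with $\mathrm{Inf}\psi(lr)=\psi(l)$; coproduct $\Delta=\bigoplus_n\sum_{I\subseteq[n]}\mathrm{st}_{(I,I^c)}\circ\mathrm{Def}^{\mathrm{UP}_I}_{\mathrm{UL}_I}\circ\mathrm{Res}^{\mathrm{UT}_n}_{\mathrm{UP}_I}$ with $\mathrm{Def}\psi(g)=\frac1{|\mathrm{UR}_I|}\sum_{x\in\mathrm{UR}_I}\psi(gx)$. Guay-Paquet's Hopf algebra $\mathsf{IG}(t)=\bigoplus_n\mathsf{IG}_n(t)$ is the free graded $\mathbb{C}[t]$-module with basis $\{\mathrm{inc}(\pi):\pi\in\mathcal{NO}_n\}$ in degree $n$ (formal symbols for incomparability graphs). For $\pi\in\mathcal{NO}_n,\rho\in\mathcal{NO}_m$, the shifted ordinal sum is $\pi\star_n\rho=\pi\sqcup\rho'\sqcup([n]\times([n+m]\setminus[n]))$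 with $\rho'=\{(i+n,j+n):(i,j)\in\rho\}$. For $I\subseteq[n]$, $\pi|^{sh}_I=\{(\mathrm{cano}_I(i),\mathrm{cano}_I(j)):(i,j)\in\pi, i,j\in I\}\in\mathcal{NO}_{|I|}$, and $\mathrm{asc}_I(\pi)=|\{(i,j)\in I\times I^c: i<j,(i,j)\notin\pi\}|$. Product: $\mu(\mathrm{inc}(\pi)\otimes\mathrm{inc}(\rho))=\mathrm{inc}(\pi\star_n\rho)$; coproduct: $\Delta(\mathrm{inc}(\pi))=\sum_{I\subseteq[n]}t^{\mathrm{asc}_I(\pi)}\mathrm{inc}(\pi|^{sh}_I)\otimes\mathrm{inc}(\pi|^{sh}_{I^c})$, both $\mathbb{C}[t]$-linear; this is a graded connected $\mathbb{C}[t]$-Hopf algebra, and $\mathsf{IG}(q^{-1})$ is the $\mathbb{C}$-Hopf algebra obtained by setting $t=q^{-1}$. *)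

theory Defs
  imports Complex_Main
begin

text \<open>Matrices over a field are functions on index pairs; an n x n matrix uses indices 1..n
  and is zero outside that range.\<close>
type_synonym 'a mat = "nat \<Rightarrow> nat \<Rightarrow> 'a"

definition mmul :: "nat \<Rightarrow> 'a::field mat \<Rightarrow> 'a mat \<Rightarrow> 'a mat" where
  "mmul N g h = (\<lambda>i j. \<Sum>k\<in>{1..N}. g i k * h k j)"

definition UT :: "nat \<Rightarrow> 'a::field mat set" where
  "UT n = {g. (\<forall>i j. g i j \<noteq> 0 \<longrightarrow> i \<in> {1..n} \<and> j \<in> {1..n} \<and> i \<le> j)
              \<and> (\<forall>i\<in>{1..n}. g i i = 1)}"

definition cf :: "nat \<Rightarrow> ('a::field mat \<Rightarrow> complex) set" where
  "cf n = {f. (\<forall>g. g \<notin> UT n \<longrightarrow> f g = 0) \<and>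
             (\<forall>g\<in>UT n. \<forall>h\<in>UT n. \<forall>x\<in>UT n. mmul n h g = mmul n x h \<longrightarrow> f g = f x)}"

definition NO :: "nat \<Rightarrow> (nat \<times> nat) set set" where
  "NO n = {\<pi>. \<pi> \<subseteq> {1..n} \<times> {1..n} \<and> (\<forall>i\<in>{1..n}. (i, i) \<in> \<pi>)
             \<and> antisym \<pi> \<and> trans \<pi> \<and> (\<forall>(i, j)\<in>\<pi>. i \<le> j)
             \<and> (\<forall>(j, k)\<in>\<pi>. j \<noteq> k \<longrightarrow>
                   (\<forall>i l. 1 \<le> i \<and> i \<le> j \<and> k \<le> l \<and> l \<le> n \<longrightarrow> (i, l) \<in> \<pi>))}"

definition delta :: "nat \<Rightarrow> (nat \<times> nat) set \<Rightarrow> 'a::field mat \<Rightarrow> complex" where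
  "delta n \<pi> g = (if g \<in> UT n \<and> (\<forall>i j. i \<noteq> j \<longrightarrow> g i j \<noteq> 0 \<longrightarrow> (i, j) \<in> \<pi>) then 1 else 0)"

definition cano :: "nat set \<Rightarrow> nat \<Rightarrow> nat" where
  "cano I i = card {k\<in>I. k \<le> i}"

text \<open>The inverse of the relabelling isomorphism UL_I = UT_|I| x UT_|I^c| (on elements):
  put x into the I x I block and y into the I^c x I^c block.\<close>
definition embed :: "nat \<Rightarrow> nat set \<Rightarrow> 'a::field mat \<Rightarrow> 'a mat \<Rightarrow> 'a mat" where
  "embed n I x y = (\<lambda>i j.
     if i \<in> I \<and> j \<in> I then x (cano I i) (cano I j)
     else if i \<in> {1..n} - I \<and> j \<in> {1..n} - I
       then y (cano ({1..n} - I) i) (cano ({1..n} - I) j)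
     else 0)"

definition UR :: "nat \<Rightarrow> nat set \<Rightarrow> 'a::field mat set" where
  "UR n I = {g \<in> UT n. \<forall>i j. i \<noteq> j \<longrightarrow> g i j \<noteq> 0 \<longrightarrow> i \<in> I \<and> j \<in> {1..n} - I}"

text \<open>Product of cf(UT_bullet) on cf(UT_n) (x) cf(UT_m), where an element of the tensor product
  is represented as a function on UT_n x UT_m: Inf^{UT_(n+m)}_{UL_[n]} o st^{-1}.\<close>
definition cf_mult :: "nat \<Rightarrow> nat \<Rightarrow> ('a::field mat \<Rightarrow> 'a mat \<Rightarrow> complex) \<Rightarrow> 'a mat \<Rightarrow> complex" where
  "cf_mult n m F g =
     (\<Sum>x\<in>UT n. \<Sum>y\<in>UT m. \<Sum>r\<in>UR (n + m) {1..n}.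
        if g = mmul (n + m) (embed (n + m) {1..n} x y) r then F x y else 0)"

text \<open>Component in cf(UT_a) (x) cf(UT_(n-a)) (as a function on UT_a x UT_(n-a)) of the
  coproduct of chi in cf(UT_n): sum over |I| = a of st o Def o Res.\<close>
definition cf_coprod :: "nat \<Rightarrow> nat \<Rightarrow> ('a::field mat \<Rightarrow> complex) \<Rightarrow> 'a mat \<Rightarrow> 'a mat \<Rightarrow> complex" where
  "cf_coprod n a \<chi> x y =
     (\<Sum>I\<in>{I. I \<subseteq> {1..n} \<and> card I = a}.
        (1 / of_nat (card (UR n I :: 'a mat set))) *
        (\<Sum>r\<in>UR n I. \<chi> (mmul n (embed n I x y) r)))"

definition ordsum :: "nat \<Rightarrow> nat \<Rightarrow> (nat \<times> nat) set \<Rightarrow> (nat \<times> nat) set \<Rightarrow> (nat \<times> nat) set" where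
  "ordsum n m \<pi> \<rho> = \<pi> \<union> {(i + n, j + n) | i j. (i, j) \<in> \<rho>} \<union> ({1..n} \<times> ({1..n + m} - {1..n}))"

definition restr_sh :: "nat set \<Rightarrow> (nat \<times> nat) set \<Rightarrow> (nat \<times> nat) set" where
  "restr_sh I \<pi> = {(cano I i, cano I j) | i j. (i, j) \<in> \<pi> \<and> i \<in> I \<and> j \<in> I}"

definition asc :: "nat \<Rightarrow> nat set \<Rightarrow> (nat \<times> nat) set \<Rightarrow> nat" where
  "asc n I \<pi> = card {(i, j). i \<in> I \<and> j \<in> {1..n} - I \<and> i < j \<and> (i, j) \<notin> \<pi>}"

text \<open>The graded linear map IG(q^{-1}) -> cf(UT_bullet), inc(pi) |-> delta_pi, applied to an
  element of IG(q^{-1}) given by its coefficient function c on basis elements (n, pi);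
  the result is the family of its homogeneous components.\<close>
definition phi :: "(nat \<times> (nat \<times> nat) set \<Rightarrow> complex) \<Rightarrow> nat \<Rightarrow> 'a::field mat \<Rightarrow> complex" where
  "phi c n g = (\<Sum>\<pi>\<in>NO n. c (n, \<pi>) * delta n \<pi> g)"

definition IG_elems :: "(nat \<times> (nat \<times> nat) set \<Rightarrow> complex) set" where
  "IG_elems = {c. finite {k. c k \<noteq> 0} \<and> (\<forall>k. c k \<noteq> 0 \<longrightarrow> snd k \<in> NO (fst k))}"

end

theory Submission
  imports Defs "HOL-Library.FuncSet"
begin

text \<open>
  For a natural unit interval order \<open>\<pi>\<close>, the complement of \<open>\<pi>\<close> above the diagonal is closed
  under shrinking intervals \<open>[i, j]\<close>.  Comparing the entries of \<open>h g\<close> and \<open>x h\<close> then shows, by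
  induction on \<open>j - i\<close>, that a conjugate of a matrix in \<open>UT(\<pi>)\<close> lies in \<open>UT(\<pi>)\<close>.

  For the coproduct, let \<open>l \<in> UL\<^sub>I\<close>.  For \<open>r \<in> UR\<^sub>I\<close> the product \<open>l r\<close> agrees with \<open>l\<close> off the
  block \<open>I \<times> I\<^sup>c\<close>, and its \<open>I \<times> I\<^sup>c\<close> block, as a function of \<open>r\<close>, is a bijection of \<open>UR\<^sub>I\<close>.
  Hence the average of \<open>\<delta>\<^sub>\<pi>\<close> over the coset \<open>l UR\<^sub>I\<close> is
  \<open>\<delta>\<^sub>\<pi>(l) q\<^bsup>|UR\<^sub>I \<inter> \<pi>|\<^esup> / q\<^bsup>|UR\<^sub>I|\<^esup> = \<delta>\<^sub>\<pi>(l) q\<^bsup>-asc\<^sub>I(\<pi>)\<^esup>\<close>, where \<open>|UR\<^sub>I|\<close> counts the free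
  positions, and \<open>\<delta>\<^sub>\<pi>(l)\<close> splits into the indicators of the restricted orders on the two
  diagonal blocks of \<open>l\<close>.

  For the product, every \<open>g \<in> UT\<^sub>n\<^sub>+\<^sub>m\<close> factors uniquely as \<open>l r\<close> with \<open>l \<in> UL\<^sub>[\<^sub>n\<^sub>]\<close> and
  \<open>r \<in> UR\<^sub>[\<^sub>n\<^sub>]\<close>, where the diagonal blocks of \<open>l\<close> are those of \<open>g\<close>; and \<open>g\<close> lies in the
  pattern group of the ordinal sum iff its diagonal blocks lie in those of the summands.

  Injectivity holds because \<open>\<delta>\<^sub>\<rho>\<close>, evaluated at the matrix with pattern \<open>\<pi>\<close>, is
  \<open>[\<pi> \<subseteq> \<rho>]\<close>: the system is triangular with respect to inclusion.
\<close>

section \<open>Unitriangular matrices\<close>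

lemma UT_nz: "g \<in> UT n \<Longrightarrow> g i j \<noteq> 0 \<Longrightarrow> 1 \<le> i \<and> i \<le> j \<and> j \<le> n"
  by (auto simp: UT_def)

lemma UT_eq_0: "g \<in> UT n \<Longrightarrow> \<not> (1 \<le> i \<and> i \<le> j \<and> j \<le> n) \<Longrightarrow> g i j = 0"
  using UT_nz by blast

lemma UT_diag: "g \<in> UT n \<Longrightarrow> 1 \<le> i \<Longrightarrow> i \<le> n \<Longrightarrow> g i i = 1"
  by (auto simp: UT_def)

lemma UT_I:
  "(\<And>i j. g i j \<noteq> 0 \<Longrightarrow> 1 \<le> i \<and> i \<le> j \<and> j \<le> n) \<Longrightarrow> (\<And>i. 1 \<le> i \<Longrightarrow> i \<le> n \<Longrightarrow> g i i = 1)
    \<Longrightarrow> g \<in> UT n"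
  by (auto simp: UT_def) (meson order_trans)+

lemma finite_UT: "finite (UT n :: 'a::{finite,field} mat set)"
proof -
  let ?S = "{f :: nat \<times> nat \<Rightarrow> 'a. \<forall>p.
    (p \<in> {1..n} \<times> {1..n} \<longrightarrow> f p \<in> UNIV) \<and> (p \<notin> {1..n} \<times> {1..n} \<longrightarrow> f p = 0)}"
  have "finite ?S"
    by (rule finite_set_of_finite_funs) simp_all
  moreover have "g \<in> curry ` ?S" if "g \<in> UT n" for g
  proof
    show "g = curry (case_prod g)" by simp
    show "case_prod g \<in> ?S" using UT_nz[OF that] by fastforce
  qed
  ultimately show ?thesis
    by (meson finite_imageI finite_subset subsetI)
qed

lemma mmul_entry_UT:
  assumes g: "g \<in> UT N" and h: "h \<in> UT N" and ij: "1 \<le> i" "i < j" "j \<le> N"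
  shows "mmul N g h i j = g i j + h i j + (\<Sum>k\<in>{i<..<j}. g i k * h k j)"
proof -
  have "mmul N g h i j = (\<Sum>k\<in>{i..j}. g i k * h k j)"
    unfolding mmul_def using ij UT_nz[OF g, of i] UT_nz[OF h, of _ j]
    by (intro sum.mono_neutral_right) fastforce+
  also have "\<dots> = g i i * h i j + g i j * h j j + (\<Sum>k\<in>{i<..<j}. g i k * h k j)"
  proof -
    have "{i..j} = insert i (insert j {i<..<j})"
      using ij by auto
    then show ?thesis
      using ij by (simp add: add.assoc)
  qed
  finally show ?thesis
    using ij UT_diag[OF g, of i] UT_diag[OF h, of j] by simp
qed

lemma mmul_UT:
  assumes g: "g \<in> UT N" and h: "h \<in> UT N"
  shows "mmul N g h \<in> UT N"
proof (rule UT_I)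
  fix i j
  assume "mmul N g h i j \<noteq> 0"
  then obtain k where "g i k * h k j \<noteq> 0"
    unfolding mmul_def by (meson sum.not_neutral_contains_not_neutral)
  then show "1 \<le> i \<and> i \<le> j \<and> j \<le> N"
    using UT_nz[OF g, of i k] UT_nz[OF h, of k j] by auto
next
  fix i
  assume i: "1 \<le> i" "i \<le> N"
  have "\<forall>k\<in>{1..N} - {i}. g i k * h k i = 0"
    using UT_nz[OF g, of i] UT_nz[OF h, of _ i] by force
  then have "mmul N g h i i = g i i * h i i"
    unfolding mmul_def using i by (simp add: sum.remove[of _ i] sum.neutral)
  then show "mmul N g h i i = 1"
    using UT_diag[OF g i] UT_diag[OF h i] by simp
qed

section \<open>Pattern indicators are class functions\<close>

definition offdiag_supp :: "'a::zero mat \<Rightarrow> (nat \<times> nat) set" where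
  "offdiag_supp g = {(i, j). i \<noteq> j \<and> g i j \<noteq> 0}"

lemma delta_eq: "delta n \<pi> g = (if g \<in> UT n \<and> offdiag_supp g \<subseteq> \<pi> then 1 else 0)"
  by (auto simp: delta_def offdiag_supp_def)

lemma NO_subset: "\<pi> \<in> NO n \<Longrightarrow> \<pi> \<subseteq> {1..n} \<times> {1..n}"
  by (simp add: NO_def)

lemma NO_refl: "\<pi> \<in> NO n \<Longrightarrow> i \<in> {1..n} \<Longrightarrow> (i, i) \<in> \<pi>"
  by (simp add: NO_def)

lemma NO_le: "\<pi> \<in> NO n \<Longrightarrow> (i, j) \<in> \<pi> \<Longrightarrow> i \<le> j"
  by (auto simp: NO_def)

lemma finite_NO: "finite (NO n)"
proof (rule finite_subset)
  show "NO n \<subseteq> Pow ({1..n} \<times> {1..n})"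
    using NO_subset by blast
qed simp

lemma NO_not_mem_interval:
  assumes "\<pi> \<in> NO n" "(i, j) \<notin> \<pi>" "1 \<le> i" "i < k" "k < j" "j \<le> n"
  shows "(i, k) \<notin> \<pi> \<and> (k, j) \<notin> \<pi>"
proof -
  have interval_closed: "\<forall>(b, c)\<in>\<pi>. b \<noteq> c \<longrightarrow> (\<forall>a d. 1 \<le> a \<and> a \<le> b \<and> c \<le> d \<and> d \<le> n \<longrightarrow> (a, d) \<in> \<pi>)"
    using assms(1) unfolding NO_def by (elim CollectE conjE)
  have closed: "(a, d) \<in> \<pi>" if "(b, c) \<in> \<pi>" "b \<noteq> c" "1 \<le> a" "a \<le> b" "c \<le> d" "d \<le> n" for a b c d
    using bspec[OF interval_closed that(1)] that(2-) by simp
  show ?thesis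
    using closed[where a = i and b = i and c = k and d = j]
      closed[where a = i and b = k and c = j and d = j] assms(2-)
    by auto
qed

lemma offdiag_supp_subset_iff:
  assumes "g \<in> UT n"
  shows "offdiag_supp g \<subseteq> \<pi> \<longleftrightarrow> (\<forall>i j. i < j \<longrightarrow> (i, j) \<notin> \<pi> \<longrightarrow> g i j = 0)"
proof
  assume supp: "offdiag_supp g \<subseteq> \<pi>"
  show "\<forall>i j. i < j \<longrightarrow> (i, j) \<notin> \<pi> \<longrightarrow> g i j = 0"
  proof (intro allI impI)
    fix i j
    assume "i < j" "(i, j) \<notin> \<pi>"
    then show "g i j = 0"
      using subsetD[OF supp, of "(i, j)"] by (auto simp: offdiag_supp_def)
  qed
next
  assume vanish: "\<forall>i j. i < j \<longrightarrow> (i, j) \<notin> \<pi> \<longrightarrow> g i j = 0"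
  show "offdiag_supp g \<subseteq> \<pi>"
  proof (clarsimp simp: offdiag_supp_def)
    fix i j
    assume "i \<noteq> j" "g i j \<noteq> 0"
    with UT_nz[OF assms this(2)] have "i < j"
      by simp
    with vanish \<open>g i j \<noteq> 0\<close> show "(i, j) \<in> \<pi>"
      by blast
  qed
qed

lemma conj_entry_diff:
  assumes g: "g \<in> UT n" and h: "h \<in> UT n" and x: "x \<in> UT n" and conj: "mmul n h g = mmul n x h"
    and ij: "1 \<le> i" "i < j" "j \<le> n"
  shows "x i j - g i j = (\<Sum>k\<in>{i<..<j}. h i k * g k j - x i k * h k j)"
  using arg_cong[OF conj, of "\<lambda>f. f i j"] mmul_entry_UT[OF h g ij] mmul_entry_UT[OF x h ij]
  by (simp add: sum_subtractf algebra_simps)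

lemma conj_entry_eq_outside:
  assumes P: "\<pi> \<in> NO n" and g: "g \<in> UT n" and h: "h \<in> UT n" and x: "x \<in> UT n"
    and conj: "mmul n h g = mmul n x h" and out: "(i, j) \<notin> \<pi>" "i < j"
    and shorter: "\<And>k l. k < l \<Longrightarrow> l - k < j - i \<Longrightarrow> (k, l) \<notin> \<pi> \<Longrightarrow> g k l = 0 \<and> x k l = 0"
  shows "x i j = g i j"
proof (cases "1 \<le> i \<and> j \<le> n")
  case True
  have "h i k * g k j - x i k * h k j = 0" if "k \<in> {i<..<j}" for k
  proof -
    have "(i, k) \<notin> \<pi>" "(k, j) \<notin> \<pi>"
      using NO_not_mem_interval[OF P out(1)] True that by auto
    then show ?thesis
      using shorter[of k j] shorter[of i k] that by auto
  qed
  then have "x i j - g i j = 0"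
    using conj_entry_diff[OF g h x conj, of i j] True out(2) by (simp add: sum.neutral)
  then show ?thesis
    by simp
next
  case False
  then have "g i j = 0" "x i j = 0"
    using UT_nz[OF g, of i j] UT_nz[OF x, of i j] by auto
  then show ?thesis
    by simp
qed

lemma offdiag_supp_conj_iff:
  assumes P: "\<pi> \<in> NO n" and g: "g \<in> UT n" and h: "h \<in> UT n" and x: "x \<in> UT n"
    and conj: "mmul n h g = mmul n x h"
  shows "offdiag_supp g \<subseteq> \<pi> \<longleftrightarrow> offdiag_supp x \<subseteq> \<pi>"
proof -
  define vanish where
    "vanish d a \<longleftrightarrow> (\<forall>i j. i < j \<longrightarrow> j - i < d \<longrightarrow> (i, j) \<notin> \<pi> \<longrightarrow> a i j = 0)"
    for d and a :: "'a mat"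
  have "vanish d g \<longleftrightarrow> vanish d x" for d
  proof (induction d)
    case 0
    show ?case
      by (simp add: vanish_def)
  next
    case (Suc d)
    have "x i j = g i j" if "vanish d g" "vanish d x" "i < j" "j - i = d" "(i, j) \<notin> \<pi>" for i j
      by (rule conj_entry_eq_outside[OF P g h x conj that(5,3)])
        (use that(1,2,4) in \<open>simp add: vanish_def\<close>)
    moreover have "vanish (Suc d) a \<longleftrightarrow>
        vanish d a \<and> (\<forall>i j. i < j \<longrightarrow> j - i = d \<longrightarrow> (i, j) \<notin> \<pi> \<longrightarrow> a i j = 0)" for a
      unfolding vanish_def using less_Suc_eq by auto
    ultimately show ?case
      using Suc.IH by metis
  qed
  moreover have "offdiag_supp a \<subseteq> \<pi> \<longleftrightarrow> (\<forall>d. vanish d a)" if "a \<in> UT n" for a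
    unfolding offdiag_supp_subset_iff[OF that] vanish_def by (meson lessI)
  ultimately show ?thesis
    using g x by blast
qed

lemma delta_in_cf:
  assumes "\<pi> \<in> NO n"
  shows "delta n \<pi> \<in> cf n"
  unfolding cf_def
proof (intro CollectI conjI allI ballI impI)
  fix g h x :: "'a mat"
  assume "g \<in> UT n" "h \<in> UT n" "x \<in> UT n" "mmul n h g = mmul n x h"
  with offdiag_supp_conj_iff[OF assms this] show "delta n \<pi> g = delta n \<pi> x"
    by (simp add: delta_eq)
qed (simp add: delta_eq)

section \<open>The subgroup \<open>UR\<^sub>I\<close> and its cosets\<close>

definition id_mat :: "nat \<Rightarrow> 'a::zero_neq_one mat" where
  "id_mat N i j = (if i = j \<and> i \<in> {1..N} then 1 else 0)"

definition id_off :: "nat \<Rightarrow> (nat \<times> nat) set \<Rightarrow> 'a::zero_neq_one mat set" where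
  "id_off N S = {g. \<forall>i j. (i, j) \<notin> S \<longrightarrow> g i j = id_mat N i j}"

lemma id_off_nz: "g \<in> id_off N S \<Longrightarrow> g i j \<noteq> 0 \<Longrightarrow> (i, j) \<in> S \<or> (i = j \<and> i \<in> {1..N})"
  by (cases "(i, j) \<in> S") (auto simp: id_off_def id_mat_def split: if_splits)

lemma card_id_off:
  assumes "finite S"
  shows "card (id_off N S :: 'a::{finite,zero_neq_one} mat set) = card (UNIV :: 'a set) ^ card S"
proof -
  let ?entries = "\<lambda>g::'a mat. restrict (case_prod g) S"
  let ?fill = "\<lambda>f i j. if (i, j) \<in> S then f (i, j) else (id_mat N i j :: 'a)"
  have "bij_betw ?entries (id_off N S) (S \<rightarrow>\<^sub>E UNIV)"
    by (rule bij_betw_byWitness[where f' = ?fill])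
      (auto simp: id_off_def fun_eq_iff PiE_def extensional_def)
  then have "card (id_off N S :: 'a mat set) = card (S \<rightarrow>\<^sub>E (UNIV :: 'a set))"
    by (rule bij_betw_same_card)
  also have "\<dots> = card (UNIV :: 'a set) ^ card S"
    by (rule card_funcsetE[OF assms])
  finally show ?thesis .
qed

lemma id_off_offdiag_supp_subset:
  assumes "\<forall>(i, j)\<in>S. i \<noteq> j"
  shows "{s \<in> id_off N S. offdiag_supp s \<subseteq> \<pi>} = id_off N (S \<inter> \<pi>)"
proof (intro set_eqI iffI)
  fix s :: "'a mat"
  assume "s \<in> {s \<in> id_off N S. offdiag_supp s \<subseteq> \<pi>}"
  then have s: "s \<in> id_off N S" "offdiag_supp s \<subseteq> \<pi>"
    by auto
  have "s i j = id_mat N i j" if "(i, j) \<notin> S \<inter> \<pi>" for i j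
  proof (cases "(i, j) \<in> S")
    case True
    then have "i \<noteq> j" "(i, j) \<notin> \<pi>"
      using assms that by auto
    then have "s i j = 0"
      using subsetD[OF s(2), of "(i, j)"] by (auto simp: offdiag_supp_def)
    then show ?thesis
      using \<open>i \<noteq> j\<close> by (simp add: id_mat_def)
  next
    case False
    then show ?thesis
      using s(1) by (simp add: id_off_def)
  qed
  then show "s \<in> id_off N (S \<inter> \<pi>)"
    by (simp add: id_off_def)
next
  fix s :: "'a mat"
  assume s: "s \<in> id_off N (S \<inter> \<pi>)"
  then have "s \<in> id_off N S"
    by (simp add: id_off_def)
  moreover have "offdiag_supp s \<subseteq> \<pi>"
    using id_off_nz[OF s] by (auto simp: offdiag_supp_def)
  ultimately show "s \<in> {s \<in> id_off N S. offdiag_supp s \<subseteq> \<pi>}"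
    by simp
qed

definition UR_pos :: "nat \<Rightarrow> nat set \<Rightarrow> (nat \<times> nat) set" where
  "UR_pos N I = {(i, j). i \<in> I \<and> j \<in> {1..N} - I \<and> i < j}"

lemma finite_UR_pos: "finite (UR_pos N I)"
  by (rule finite_subset[of _ "{0..N} \<times> {1..N}"]) (auto simp: UR_pos_def)

lemma asc_eq_card_UR_pos: "asc n I \<pi> = card (UR_pos n I - \<pi>)"
  unfolding asc_def UR_pos_def by (rule arg_cong[where f = card]) auto

lemma UR_UT: "r \<in> UR N I \<Longrightarrow> r \<in> UT N"
  by (simp add: UR_def)

lemma UR_nz: "r \<in> UR N I \<Longrightarrow> i \<noteq> j \<Longrightarrow> r i j \<noteq> 0 \<Longrightarrow> i \<in> I \<and> j \<in> {1..N} - I"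
  by (simp add: UR_def)

lemma UR_eq_id_mat:
  assumes r: "r \<in> UR N I" and off: "(i, j) \<notin> UR_pos N I"
  shows "r i j = id_mat N i j"
proof (cases "i = j")
  case True
  then show ?thesis
    using UT_diag[OF UR_UT[OF r], of i] UT_nz[OF UR_UT[OF r], of i i] by (auto simp: id_mat_def)
next
  case False
  have "r i j = 0"
  proof (rule ccontr)
    assume "r i j \<noteq> 0"
    with UR_nz[OF r False] UT_nz[OF UR_UT[OF r] this] False have "(i, j) \<in> UR_pos N I"
      by (auto simp: UR_pos_def)
    with off show False ..
  qed
  then show ?thesis
    using False by (simp add: id_mat_def)
qed

lemma UR_off_block:
  assumes "r \<in> UR N I" "\<not> (i \<in> I \<and> j \<in> {1..N} - I)"
  shows "r i j = id_mat N i j"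
proof (rule UR_eq_id_mat[OF assms(1)])
  show "(i, j) \<notin> UR_pos N I"
    using assms(2) by (simp add: UR_pos_def)
qed

lemma UR_eq_id_off:
  assumes I: "I \<subseteq> {1..N}"
  shows "UR N I = id_off N (UR_pos N I)"
proof (intro set_eqI iffI)
  fix g :: "'a mat"
  assume "g \<in> UR N I"
  then show "g \<in> id_off N (UR_pos N I)"
    unfolding id_off_def using UR_eq_id_mat by blast
next
  fix g :: "'a mat"
  assume g: "g \<in> id_off N (UR_pos N I)"
  have "g \<in> UT N"
  proof (rule UT_I)
    fix i j
    assume "g i j \<noteq> 0"
    with id_off_nz[OF g this] show "1 \<le> i \<and> i \<le> j \<and> j \<le> N"
      using I by (auto simp: UR_pos_def)
  next
    fix i
    assume "1 \<le> i" "i \<le> N"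
    then show "g i i = 1"
      using g by (auto simp: id_off_def id_mat_def UR_pos_def)
  qed
  moreover have "i \<in> I \<and> j \<in> {1..N} - I" if "i \<noteq> j" "g i j \<noteq> 0" for i j
    using id_off_nz[OF g that(2)] that(1) by (auto simp: UR_pos_def)
  ultimately show "g \<in> UR N I"
    by (simp add: UR_def)
qed

lemma finite_UR: "finite (UR N I :: 'a::{finite,field} mat set)"
  by (rule finite_subset[OF _ finite_UT[of N]]) (auto simp: UR_def)

lemma card_UR:
  "I \<subseteq> {1..N} \<Longrightarrow>
    card (UR N I :: 'a::{finite,field} mat set) = card (UNIV :: 'a set) ^ card (UR_pos N I)"
  by (simp add: UR_eq_id_off card_id_off finite_UR_pos)

lemma card_UR_offdiag_supp_subset:
  assumes "I \<subseteq> {1..N}"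
  shows "card {s \<in> UR N I :: 'a::{finite,field} mat set. offdiag_supp s \<subseteq> \<pi>}
    = card (UNIV :: 'a set) ^ card (UR_pos N I \<inter> \<pi>)"
proof -
  have "\<forall>(i, j)\<in>UR_pos N I. i \<noteq> j"
    by (auto simp: UR_pos_def)
  moreover have "finite (UR_pos N I \<inter> \<pi>)"
    using finite_UR_pos by simp
  ultimately show ?thesis
    by (simp add: UR_eq_id_off[OF assms] id_off_offdiag_supp_subset card_id_off)
qed

definition block_diag :: "'a::zero mat \<Rightarrow> nat set \<Rightarrow> bool" where
  "block_diag l I \<longleftrightarrow> (\<forall>i j. l i j \<noteq> 0 \<longrightarrow> (i \<in> I \<longleftrightarrow> j \<in> I))"

text \<open>For block-diagonal \<open>l\<close> this is the conjugate \<open>l\<^sub>I r l\<^sub>I\<^sup>-\<^sup>1\<close>, written without inverses,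
  where \<open>l\<^sub>I\<close> agrees with \<open>l\<close> on \<open>I \<times> I\<close> and with the identity elsewhere.\<close>
definition ur_block :: "nat \<Rightarrow> nat set \<Rightarrow> 'a::field mat \<Rightarrow> 'a mat \<Rightarrow> 'a mat" where
  "ur_block N I l r = (\<lambda>i j. if i \<in> I \<and> j \<in> {1..N} - I then mmul N l r i j else r i j)"

lemma ur_block_on: "i \<in> I \<and> j \<in> {1..N} - I \<Longrightarrow> ur_block N I l r i j = mmul N l r i j"
  unfolding ur_block_def by (rule if_P)

lemma ur_block_off: "\<not> (i \<in> I \<and> j \<in> {1..N} - I) \<Longrightarrow> ur_block N I l r i j = r i j"
  unfolding ur_block_def by (rule if_not_P)

lemma mmul_row_split:
  "i \<in> {1..N} \<Longrightarrow> mmul N g h i j = g i i * h i j + (\<Sum>k\<in>{1..N} - {i}. g i k * h k j)"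
  unfolding mmul_def by (simp add: sum.remove)

lemma mmul_eq_left_entry:
  assumes l: "l \<in> UT N" and r: "r \<in> UT N" and zero: "\<forall>k. k \<noteq> j \<longrightarrow> l i k * r k j = 0"
  shows "mmul N l r i j = l i j"
proof (cases "j \<in> {1..N}")
  case True
  have "(\<Sum>k\<in>{1..N} - {j}. l i k * r k j) = 0"
    using zero by (intro sum.neutral) blast
  then have "mmul N l r i j = l i j * r j j"
    unfolding mmul_def using True by (simp add: sum.remove[of _ j])
  then show ?thesis
    using UT_diag[OF r] True by simp
next
  case False
  then have "\<forall>k\<in>{1..N}. l i k * r k j = 0"
    using zero by auto
  then have "mmul N l r i j = 0"
    unfolding mmul_def by (rule sum.neutral)
  moreover have "l i j = 0"
    using UT_nz[OF l, of i j] False by force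
  ultimately show ?thesis
    by simp
qed

lemma mmul_block_diag_UR_off_block:
  assumes l: "l \<in> UT N" "block_diag l I" and r: "r \<in> UR N I" and off: "\<not> (i \<in> I \<and> j \<in> {1..N} - I)"
  shows "mmul N l r i j = l i j"
proof (rule mmul_eq_left_entry[OF l(1) UR_UT[OF r]], intro allI impI)
  fix k
  assume "k \<noteq> j"
  show "l i k * r k j = 0"
  proof (rule ccontr)
    assume "l i k * r k j \<noteq> 0"
    then have "l i k \<noteq> 0" "r k j \<noteq> 0"
      by auto
    with UR_nz[OF r \<open>k \<noteq> j\<close>] l(2) off show False
      unfolding block_diag_def by blast
  qed
qed

lemma ur_block_UR:
  assumes I: "I \<subseteq> {1..N}" and l: "l \<in> UT N" and r: "r \<in> UR N I"
  shows "ur_block N I l r \<in> UR N I"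
proof -
  have "ur_block N I l r i j = id_mat N i j" if "(i, j) \<notin> UR_pos N I" for i j
  proof (cases "i \<in> I \<and> j \<in> {1..N} - I")
    case True
    then have "\<not> i < j" "i \<noteq> j"
      using that by (auto simp: UR_pos_def)
    then have "mmul N l r i j = 0"
      using UT_nz[OF mmul_UT[OF l UR_UT[OF r]], of i j] by auto
    then show ?thesis
      using \<open>i \<noteq> j\<close> by (simp add: ur_block_on[OF True] id_mat_def)
  next
    case False
    then show ?thesis
      using UR_off_block[OF r False] by (simp add: ur_block_off[OF False])
  qed
  then show ?thesis
    by (simp add: UR_eq_id_off[OF I] id_off_def)
qed

text \<open>The \<open>I \<times> I\<^sup>c\<close> block of \<open>l r\<close> is \<open>r\<close> plus terms involving only later rows of \<open>r\<close>,
  so \<open>r\<close> is recovered row by row from the bottom.\<close>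
lemma inj_on_ur_block:
  assumes I: "I \<subseteq> {1..N}" and l: "l \<in> UT N"
  shows "inj_on (ur_block N I l) (UR N I)"
proof (rule inj_onI)
  fix r r'
  assume r: "r \<in> UR N I" and r': "r' \<in> UR N I" and eq: "ur_block N I l r = ur_block N I l r'"
  have "\<forall>j. r i j = r' i j" for i
  proof (induction "N - i" arbitrary: i rule: less_induct)
    case less
    show ?case
    proof
      fix j
      have entry: "ur_block N I l r i j = ur_block N I l r' i j"
        using eq by simp
      show "r i j = r' i j"
      proof (cases "i \<in> I \<and> j \<in> {1..N} - I")
        case False
        then show ?thesis
          using entry by (simp add: ur_block_off)
      next
        case True
        then have i: "i \<in> {1..N}"
          using I by auto
        have "l i k * r k j = l i k * r' k j" if "k \<in> {1..N} - {i}" for k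
        proof (cases "l i k = 0")
          case False
          then have "N - k < N - i"
            using UT_nz[OF l False] that by auto
          then show ?thesis
            using less by auto
        qed simp
        then have "(\<Sum>k\<in>{1..N} - {i}. l i k * r k j) = (\<Sum>k\<in>{1..N} - {i}. l i k * r' k j)"
          by (rule sum.cong[OF refl])
        then show ?thesis
          using entry mmul_row_split[OF i, of l r j] mmul_row_split[OF i, of l r' j] UT_diag[OF l] i
          by (simp add: ur_block_on[OF True])
      qed
    qed
  qed
  then show "r = r'"
    by (simp add: fun_eq_iff)
qed

lemma bij_betw_ur_block:
  assumes "I \<subseteq> {1..N}" and "l \<in> UT N"
  shows "bij_betw (ur_block N I l) (UR N I) (UR N I :: 'a::{finite,field} mat set)"
proof -
  have "ur_block N I l ` UR N I \<subseteq> (UR N I :: 'a mat set)"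
    using ur_block_UR[OF assms] by blast
  then have "ur_block N I l ` UR N I = (UR N I :: 'a mat set)"
    using endo_inj_surj[OF finite_UR _ inj_on_ur_block[OF assms]] by blast
  then show ?thesis
    using inj_on_ur_block[OF assms] by (simp add: bij_betw_def)
qed

lemma inj_on_mmul_UR:
  assumes I: "I \<subseteq> {1..N}" and l: "l \<in> UT N"
  shows "inj_on (mmul N l) (UR N I)"
proof (rule inj_onI)
  fix r r'
  assume r: "r \<in> UR N I" and r': "r' \<in> UR N I" and eq: "mmul N l r = mmul N l r'"
  have "ur_block N I l r i j = ur_block N I l r' i j" for i j
  proof (cases "i \<in> I \<and> j \<in> {1..N} - I")
    case True
    then show ?thesis
      using eq by (simp add: ur_block_on)
  next
    case False
    then show ?thesis
      using UR_off_block[OF r False] UR_off_block[OF r' False] by (simp add: ur_block_off)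
  qed
  then show "r = r'"
    using inj_onD[OF inj_on_ur_block[OF I l] _ r r'] by blast
qed

lemma ex_UR_factor:
  fixes g :: "'a::{finite,field} mat"
  assumes I: "I \<subseteq> {1..N}" and l: "l \<in> UT N" "block_diag l I" and g: "g \<in> UT N"
    and off: "\<And>i j. \<not> (i \<in> I \<and> j \<in> {1..N} - I) \<Longrightarrow> l i j = g i j"
  obtains r where "r \<in> UR N I" "mmul N l r = g"
proof -
  define s where "s = (\<lambda>i j. if i \<in> I \<and> j \<in> {1..N} - I then g i j else id_mat N i j)"
  have "s i j = id_mat N i j" if "(i, j) \<notin> UR_pos N I" for i j
  proof (cases "i \<in> I \<and> j \<in> {1..N} - I")
    case True
    then have "\<not> i < j" "i \<noteq> j"
      using that by (auto simp: UR_pos_def)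
    then show ?thesis
      using True UT_nz[OF g, of i j] by (auto simp: s_def id_mat_def)
  next
    case False
    then show ?thesis
      unfolding s_def by (rule if_not_P)
  qed
  then have "s \<in> UR N I"
    by (simp add: UR_eq_id_off[OF I] id_off_def)
  then obtain r where r: "r \<in> UR N I" "ur_block N I l r = s"
    using bij_betw_ur_block[OF I l(1)] by (metis bij_betw_iff_bijections)
  have "mmul N l r i j = g i j" for i j
  proof (cases "i \<in> I \<and> j \<in> {1..N} - I")
    case True
    then show ?thesis
      using ur_block_on[OF True, of l r] r(2) by (simp add: s_def)
  next
    case False
    then show ?thesis
      using mmul_block_diag_UR_off_block[OF l r(1) False] off[OF False] by simp
  qed
  then show thesis
    using that r(1) by blast
qed

lemma offdiag_supp_mmul_block_diag_UR:
  assumes l: "l \<in> UT N" "block_diag l I" and r: "r \<in> UR N I" and I: "I \<subseteq> {1..N}"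
  shows "offdiag_supp (mmul N l r) = offdiag_supp l \<union> offdiag_supp (ur_block N I l r)"
proof -
  have "mmul N l r i j \<noteq> 0 \<longleftrightarrow> l i j \<noteq> 0 \<or> ur_block N I l r i j \<noteq> 0" if "i \<noteq> j" for i j
  proof (cases "i \<in> I \<and> j \<in> {1..N} - I")
    case True
    then have "l i j = 0"
      using l(2) by (auto simp: block_diag_def)
    then show ?thesis
      by (simp add: ur_block_on[OF True])
  next
    case False
    then have "r i j = 0"
      using UR_nz[OF r that] by blast
    then show ?thesis
      by (simp add: mmul_block_diag_UR_off_block[OF l r False] ur_block_off[OF False])
  qed
  then show ?thesis
    by (auto simp: offdiag_supp_def)
qed

lemma sum_delta_eq_card:
  assumes "finite A" "A \<subseteq> UT n"
  shows "(\<Sum>g\<in>A. delta n \<pi> g) = of_nat (card {g \<in> A. offdiag_supp g \<subseteq> \<pi>})"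
proof -
  have "(\<Sum>g\<in>A. delta n \<pi> g) = (\<Sum>g\<in>A. if offdiag_supp g \<subseteq> \<pi> then 1 else 0)"
    using assms(2) by (intro sum.cong) (auto simp: delta_eq)
  also have "\<dots> = (\<Sum>g\<in>{g \<in> A. offdiag_supp g \<subseteq> \<pi>}. 1)"
    using assms(1) by (rule sum.inter_filter[symmetric])
  finally show ?thesis
    by simp
qed

lemma sum_delta_mmul_block_diag_UR:
  fixes l :: "'a::{finite,field} mat"
  assumes I: "I \<subseteq> {1..N}" and l: "l \<in> UT N" "block_diag l I"
  shows "(\<Sum>r\<in>(UR N I :: 'a mat set). delta N \<pi> (mmul N l r))
    = (if offdiag_supp l \<subseteq> \<pi> then of_nat (card (UNIV :: 'a set) ^ card (UR_pos N I \<inter> \<pi>)) else 0)"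
proof -
  have "delta N \<pi> (mmul N l r) = (if offdiag_supp l \<subseteq> \<pi> then delta N \<pi> (ur_block N I l r) else 0)"
    if r: "r \<in> UR N I" for r :: "'a mat"
    using mmul_UT[OF l(1) UR_UT[OF r]] UR_UT[OF ur_block_UR[OF I l(1) r]]
    by (simp add: delta_eq offdiag_supp_mmul_block_diag_UR[OF l r I])
  then have "(\<Sum>r\<in>(UR N I :: 'a mat set). delta N \<pi> (mmul N l r))
      = (if offdiag_supp l \<subseteq> \<pi> then \<Sum>r\<in>UR N I. delta N \<pi> (ur_block N I l r) else 0)"
    by simp
  moreover have "(\<Sum>r\<in>UR N I. delta N \<pi> (ur_block N I l r))
      = (\<Sum>s\<in>(UR N I :: 'a mat set). delta N \<pi> s)"
    by (rule sum.reindex_bij_betw[OF bij_betw_ur_block[OF I l(1)]])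
  moreover have "\<dots> = of_nat (card {s \<in> UR N I :: 'a mat set. offdiag_supp s \<subseteq> \<pi>})"
    using finite_UR UR_UT by (intro sum_delta_eq_card) blast+
  ultimately show ?thesis
    by (simp add: card_UR_offdiag_supp_subset[OF I])
qed

section \<open>Comultiplicativity\<close>

lemma cano_mono:
  assumes "finite I" "j \<in> I" "i < j"
  shows "cano I i < cano I j"
proof -
  have "{k \<in> I. k \<le> i} \<subseteq> {k \<in> I. k \<le> j}" "j \<in> {k \<in> I. k \<le> j}" "j \<notin> {k \<in> I. k \<le> i}"
    using assms(2,3) by auto
  then have "{k \<in> I. k \<le> i} \<subset> {k \<in> I. k \<le> j}"
    by blast
  then show ?thesis
    unfolding cano_def using assms(1) by (simp add: psubset_card_mono)
qed

lemma cano_le_iff: "finite I \<Longrightarrow> i \<in> I \<Longrightarrow> j \<in> I \<Longrightarrow> cano I i \<le> cano I j \<longleftrightarrow> i \<le> j"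
  by (metis cano_mono leD leI le_eq_less_or_eq)

lemma inj_on_cano: "finite I \<Longrightarrow> inj_on (cano I) I"
  by (metis cano_mono inj_on_def less_irrefl linorder_neqE_nat)

lemma cano_in_range:
  assumes "finite I" "i \<in> I"
  shows "cano I i \<in> {1..card I}"
proof -
  have "{k \<in> I. k \<le> i} \<noteq> {}" "finite {k \<in> I. k \<le> i}"
    using assms by auto
  then have "1 \<le> cano I i"
    unfolding cano_def by (simp add: Suc_leI card_gt_0_iff)
  moreover have "cano I i \<le> card I"
    unfolding cano_def using assms(1) by (intro card_mono) auto
  ultimately show ?thesis
    by simp
qed

lemma bij_betw_cano: "finite I \<Longrightarrow> bij_betw (cano I) I {1..card I}"
  unfolding bij_betw_def
  by (metis inj_on_cano cano_in_range card_atLeastAtMost card_image card_subset_eq diff_Suc_1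
      finite_atLeastAtMost image_subsetI)

lemma card_Diff_Icc: "I \<subseteq> {1..N} \<Longrightarrow> card ({1..N} - I) = N - card I"
  by (simp add: card_Diff_subset finite_subset)

lemma embed_in_block:
  "i \<in> I \<Longrightarrow> j \<in> I \<Longrightarrow> embed N I x y i j = x (cano I i) (cano I j)"
  by (simp add: embed_def)

lemma embed_in_compl_block:
  "i \<in> {1..N} - I \<Longrightarrow> j \<in> {1..N} - I \<Longrightarrow>
    embed N I x y i j = y (cano ({1..N} - I) i) (cano ({1..N} - I) j)"
  by (simp add: embed_def)

lemma embed_nz:
  "embed N I x y i j \<noteq> 0 \<Longrightarrow> (i \<in> I \<and> j \<in> I) \<or> (i \<in> {1..N} - I \<and> j \<in> {1..N} - I)"
  by (auto simp: embed_def split: if_splits)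

lemma block_diag_embed: "I \<subseteq> {1..N} \<Longrightarrow> block_diag (embed N I x y) I"
  unfolding block_diag_def using embed_nz by blast

lemma embed_nz_le:
  assumes I: "I \<subseteq> {1..N}" and x: "x \<in> UT (card I)" and y: "y \<in> UT (N - card I)"
    and nz: "embed N I x y i j \<noteq> 0"
  shows "1 \<le> i \<and> i \<le> j \<and> j \<le> N"
  using embed_nz[OF nz]
proof
  assume ij: "i \<in> I \<and> j \<in> I"
  then have "cano I i \<le> cano I j"
    using UT_nz[OF x] nz by (simp add: embed_in_block)
  then show ?thesis
    using ij I cano_le_iff[OF finite_subset[OF I]] by auto
next
  let ?C = "{1..N} - I"
  assume ij: "i \<in> ?C \<and> j \<in> ?C"
  have y': "y \<in> UT (card ?C)"
    using y card_Diff_Icc[OF I] by simp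
  from ij have "cano ?C i \<le> cano ?C j"
    using UT_nz[OF y'] nz by (simp add: embed_in_compl_block)
  then show ?thesis
    using ij cano_le_iff[of ?C] by auto
qed

lemma embed_UT:
  assumes I: "I \<subseteq> {1..N}" and x: "x \<in> UT (card I)" and y: "y \<in> UT (N - card I)"
  shows "embed N I x y \<in> UT N"
proof (rule UT_I)
  fix i j
  assume "embed N I x y i j \<noteq> 0"
  then show "1 \<le> i \<and> i \<le> j \<and> j \<le> N"
    by (rule embed_nz_le[OF assms])
next
  fix i
  assume i: "1 \<le> i" "i \<le> N"
  show "embed N I x y i i = 1"
  proof (cases "i \<in> I")
    case True
    then show ?thesis
      using cano_in_range[OF finite_subset[OF I] True] UT_diag[OF x] by (simp add: embed_in_block)
  next
    case False
    then have "i \<in> {1..N} - I"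
      using i by simp
    then show ?thesis
      using cano_in_range[of "{1..N} - I" i] UT_diag[OF y] card_Diff_Icc[OF I]
      by (simp add: embed_in_compl_block)
  qed
qed

lemma offdiag_supp_subset_restr_sh_iff:
  assumes J: "finite J" and x: "x \<in> UT (card J)"
  shows "offdiag_supp x \<subseteq> restr_sh J \<pi> \<longleftrightarrow>
    offdiag_supp (\<lambda>i j. x (cano J i) (cano J j)) \<inter> J \<times> J \<subseteq> \<pi>"
proof
  assume supp: "offdiag_supp x \<subseteq> restr_sh J \<pi>"
  show "offdiag_supp (\<lambda>i j. x (cano J i) (cano J j)) \<inter> J \<times> J \<subseteq> \<pi>"
  proof (clarsimp simp: offdiag_supp_def)
    fix i j
    assume ij: "i \<noteq> j" "x (cano J i) (cano J j) \<noteq> 0" "i \<in> J" "j \<in> J"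
    have inj: "inj_on (cano J) J"
      by (rule inj_on_cano[OF J])
    then have "cano J i \<noteq> cano J j"
      using ij inj_on_eq_iff by metis
    then have "(cano J i, cano J j) \<in> restr_sh J \<pi>"
      using supp ij(2) by (auto simp: offdiag_supp_def)
    then obtain i' j' where
      "(i', j') \<in> \<pi>" "i' \<in> J" "j' \<in> J" "cano J i = cano J i'" "cano J j = cano J j'"
      unfolding restr_sh_def by blast
    with inj ij(3,4) show "(i, j) \<in> \<pi>"
      by (metis inj_on_eq_iff)
  qed
next
  assume pulled: "offdiag_supp (\<lambda>i j. x (cano J i) (cano J j)) \<inter> J \<times> J \<subseteq> \<pi>"
  show "offdiag_supp x \<subseteq> restr_sh J \<pi>"
  proof (clarsimp simp: offdiag_supp_def)
    fix i' j'
    assume ne: "i' \<noteq> j'" and nz: "x i' j' \<noteq> 0"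
    then have "i' \<in> {1..card J}" "j' \<in> {1..card J}"
      using UT_nz[OF x nz] by auto
    then obtain i j where ij: "i \<in> J" "j \<in> J" "i' = cano J i" "j' = cano J j"
      using bij_betw_cano[OF J] unfolding bij_betw_def by blast
    then have "(i, j) \<in> \<pi>"
      using pulled ne nz by (auto simp: offdiag_supp_def)
    then show "(i', j') \<in> restr_sh J \<pi>"
      unfolding restr_sh_def using ij by blast
  qed
qed

lemma offdiag_supp_embed:
  "offdiag_supp (embed N I x y)
    = offdiag_supp (\<lambda>i j. x (cano I i) (cano I j)) \<inter> I \<times> I
      \<union> offdiag_supp (\<lambda>i j. y (cano ({1..N} - I) i) (cano ({1..N} - I) j))
        \<inter> ({1..N} - I) \<times> ({1..N} - I)"
  by (auto simp: offdiag_supp_def embed_def)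

lemma offdiag_supp_embed_subset_iff:
  assumes I: "I \<subseteq> {1..N}" and x: "x \<in> UT (card I)" and y: "y \<in> UT (N - card I)"
  shows "offdiag_supp (embed N I x y) \<subseteq> \<pi> \<longleftrightarrow>
    offdiag_supp x \<subseteq> restr_sh I \<pi> \<and> offdiag_supp y \<subseteq> restr_sh ({1..N} - I) \<pi>"
  using offdiag_supp_subset_restr_sh_iff[OF finite_subset[OF I] x]
    offdiag_supp_subset_restr_sh_iff[of "{1..N} - I" y] y card_Diff_Icc[OF I]
  by (simp add: offdiag_supp_embed)

lemma delta_embed:
  assumes I: "I \<subseteq> {1..N}" and x: "x \<in> UT (card I)" and y: "y \<in> UT (N - card I)"
  shows "delta N \<pi> (embed N I x y)
    = delta (card I) (restr_sh I \<pi>) x * delta (N - card I) (restr_sh ({1..N} - I) \<pi>) y"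
  using embed_UT[OF assms] offdiag_supp_embed_subset_iff[OF assms] x y by (simp add: delta_eq)

lemma cf_coprod_summand_delta:
  fixes x y :: "'a::{finite,field} mat"
  assumes I: "I \<subseteq> {1..n}" and x: "x \<in> UT (card I)" and y: "y \<in> UT (n - card I)"
  shows "1 / of_nat (card (UR n I :: 'a mat set))
        * (\<Sum>r\<in>UR n I. delta n \<pi> (mmul n (embed n I x y) r))
    = (1 / of_nat (card (UNIV :: 'a set))) ^ asc n I \<pi>
      * delta (card I) (restr_sh I \<pi>) x * delta (n - card I) (restr_sh ({1..n} - I) \<pi>) y"
proof -
  define q :: complex where "q = of_nat (card (UNIV :: 'a set))"
  define l where "l = embed n I x y"
  have l: "l \<in> UT n" "block_diag l I"
    unfolding l_def using embed_UT[OF I x y] block_diag_embed[OF I] by auto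
  have "q \<noteq> 0"
    by (simp add: q_def)
  have "card (UR n I :: 'a mat set) = card (UNIV :: 'a set) ^ card (UR_pos n I)"
    by (rule card_UR[OF I])
  then have card_UR:
    "of_nat (card (UR n I :: 'a mat set)) = q ^ card (UR_pos n I \<inter> \<pi>) * q ^ asc n I \<pi>"
    using card_Int_Diff[OF finite_UR_pos, of n I \<pi>]
    by (simp add: q_def asc_eq_card_UR_pos power_add)
  have "delta (card I) (restr_sh I \<pi>) x * delta (n - card I) (restr_sh ({1..n} - I) \<pi>) y
      = (if offdiag_supp l \<subseteq> \<pi> then 1 else 0)"
    using delta_embed[OF I x y] l(1) by (simp add: l_def delta_eq)
  then show ?thesis
    using sum_delta_mmul_block_diag_UR[OF I l, of \<pi>] card_UR \<open>q \<noteq> 0\<close>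
    by (simp add: l_def[symmetric] q_def[symmetric] power_one_over)
qed

lemma cf_coprod_delta:
  fixes x y :: "'a::{finite,field} mat"
  assumes x: "x \<in> UT a" and y: "y \<in> UT (n - a)"
  shows "cf_coprod n a (delta n \<pi>) x y
    = (\<Sum>I\<in>{I. I \<subseteq> {1..n} \<and> card I = a}. (1 / of_nat (card (UNIV :: 'a set))) ^ asc n I \<pi>
        * delta a (restr_sh I \<pi>) x * delta (n - a) (restr_sh ({1..n} - I) \<pi>) y)"
  unfolding cf_coprod_def
proof (intro sum.cong refl)
  fix I
  assume "I \<in> {I. I \<subseteq> {1..n} \<and> card I = a}"
  then have I: "I \<subseteq> {1..n}" and a: "card I = a"
    by auto
  show "1 / of_nat (card (UR n I :: 'a mat set))
      * (\<Sum>r\<in>UR n I. delta n \<pi> (mmul n (embed n I x y) r))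
    = (1 / of_nat (card (UNIV :: 'a set))) ^ asc n I \<pi>
      * delta a (restr_sh I \<pi>) x * delta (n - a) (restr_sh ({1..n} - I) \<pi>) y"
    using cf_coprod_summand_delta[OF I, of x y \<pi>] x y a by simp
qed

section \<open>Multiplicativity\<close>

lemma cano_Icc: "i \<le> n \<Longrightarrow> cano {1..n} i = i"
proof -
  assume "i \<le> n"
  then have "{k \<in> {1..n}. k \<le> i} = {1..i}"
    by auto
  then show ?thesis
    unfolding cano_def by simp
qed

lemma cano_Icc_compl: "n < i \<Longrightarrow> i \<le> N \<Longrightarrow> cano ({1..N} - {1..n}) i = i - n"
proof -
  assume "n < i" "i \<le> N"
  then have "{k \<in> {1..N} - {1..n}. k \<le> i} = {Suc n..i}"
    by auto
  then show ?thesis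
    unfolding cano_def by simp
qed

lemma embed_Icc:
  "embed (n + m) {1..n} x y i j =
    (if i \<in> {1..n} \<and> j \<in> {1..n} then x i j
     else if n < i \<and> i \<le> n + m \<and> n < j \<and> j \<le> n + m then y (i - n) (j - n) else 0)"
  unfolding embed_def using cano_Icc[of _ n] cano_Icc_compl[of n _ "n + m"]
  by (auto simp del: One_nat_def)

definition diag_block :: "nat \<Rightarrow> nat \<Rightarrow> 'a::zero mat \<Rightarrow> 'a mat" where
  "diag_block a b g = (\<lambda>i j. if i \<in> {1..b} \<and> j \<in> {1..b} then g (i + a) (j + a) else 0)"

lemma diag_block_UT:
  assumes g: "g \<in> UT N" and "a + b \<le> N"
  shows "diag_block a b g \<in> UT b"
proof (rule UT_I)
  fix i j
  assume "diag_block a b g i j \<noteq> 0"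
  then show "1 \<le> i \<and> i \<le> j \<and> j \<le> b"
    using UT_nz[OF g, of "i + a" "j + a"] by (auto simp: diag_block_def split: if_splits)
next
  fix i
  assume "1 \<le> i" "i \<le> b"
  then show "diag_block a b g i i = 1"
    using UT_diag[OF g, of "i + a"] assms(2) by (simp add: diag_block_def)
qed

lemma diag_block_cong:
  "(\<And>i j. i \<in> {1..b} \<Longrightarrow> j \<in> {1..b} \<Longrightarrow> g (i + a) (j + a) = h (i + a) (j + a))
    \<Longrightarrow> diag_block a b g = diag_block a b h"
  by (simp add: diag_block_def fun_eq_iff)

lemma diag_block_embed_Icc:
  assumes x: "x \<in> UT n" and y: "y \<in> UT m"
  shows "diag_block 0 n (embed (n + m) {1..n} x y) = x"
    and "diag_block n m (embed (n + m) {1..n} x y) = y"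
  using UT_eq_0[OF x] UT_eq_0[OF y] unfolding embed_Icc by (auto simp: diag_block_def fun_eq_iff)

lemma embed_Icc_diag_blocks:
  assumes g: "g \<in> UT (n + m)" and off: "\<not> (i \<in> {1..n} \<and> j \<in> {1..n + m} - {1..n})"
  shows "embed (n + m) {1..n} (diag_block 0 n g) (diag_block n m g) i j = g i j"
proof (cases "g i j = 0")
  case True
  then show ?thesis
    unfolding embed_Icc by (simp add: diag_block_def)
next
  case False
  with UT_nz[OF g False] off show ?thesis
    unfolding embed_Icc by (auto simp: diag_block_def)
qed

lemma mem_ordsum_iff:
  assumes "\<rho> \<subseteq> {1..m} \<times> {1..m}"
  shows "(i, j) \<in> ordsum n m \<pi> \<rho> \<longleftrightarrow>
    (i, j) \<in> \<pi> \<or> (n < i \<and> n < j \<and> (i - n, j - n) \<in> \<rho>) \<or> (i \<in> {1..n} \<and> n < j \<and> j \<le> n + m)"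
proof -
  have "(i, j) \<in> {(a + n, b + n) | a b. (a, b) \<in> \<rho>} \<longleftrightarrow> n < i \<and> n < j \<and> (i - n, j - n) \<in> \<rho>"
  proof
    assume "(i, j) \<in> {(a + n, b + n) | a b. (a, b) \<in> \<rho>}"
    then obtain a b where "i = a + n" "j = b + n" "(a, b) \<in> \<rho>"
      by blast
    with assms show "n < i \<and> n < j \<and> (i - n, j - n) \<in> \<rho>"
      by auto
  next
    assume "n < i \<and> n < j \<and> (i - n, j - n) \<in> \<rho>"
    then show "(i, j) \<in> {(a + n, b + n) | a b. (a, b) \<in> \<rho>}"
      by (intro CollectI exI[of _ "i - n"] exI[of _ "j - n"]) auto
  qed
  then show ?thesis
    unfolding ordsum_def by auto
qed

lemma offdiag_supp_subset_ordsumI: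
  assumes R: "\<rho> \<subseteq> {1..m} \<times> {1..m}" and g: "g \<in> UT (n + m)"
    and blocks: "offdiag_supp (diag_block 0 n g) \<subseteq> \<pi>" "offdiag_supp (diag_block n m g) \<subseteq> \<rho>"
  shows "offdiag_supp g \<subseteq> ordsum n m \<pi> \<rho>"
proof (clarsimp simp: offdiag_supp_def)
  fix i j
  assume ne: "i \<noteq> j" and nz: "g i j \<noteq> 0"
  note ij = UT_nz[OF g nz]
  consider "j \<le> n" | "n < i" | "i \<le> n" "n < j"
    by linarith
  then show "(i, j) \<in> ordsum n m \<pi> \<rho>"
  proof cases
    case 1
    then have "diag_block 0 n g i j \<noteq> 0"
      using ij nz by (simp add: diag_block_def)
    then have "(i, j) \<in> \<pi>"
      using blocks(1) ne by (auto simp: offdiag_supp_def)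
    then show ?thesis
      using mem_ordsum_iff[OF R] by blast
  next
    case 2
    then have "i - n \<in> {1..m}" "j - n \<in> {1..m}"
      using ij by auto
    then have "diag_block n m g (i - n) (j - n) \<noteq> 0"
      using 2 ij nz by (simp add: diag_block_def)
    moreover have "i - n \<noteq> j - n"
      using 2 ij ne by simp
    ultimately have "(i - n, j - n) \<in> \<rho>"
      using blocks(2) by (auto simp: offdiag_supp_def)
    then show ?thesis
      using mem_ordsum_iff[OF R] 2 ij by simp
  next
    case 3
    then show ?thesis
      using mem_ordsum_iff[OF R] ij by simp
  qed
qed

lemma offdiag_supp_subset_ordsum_iff:
  assumes P: "\<pi> \<subseteq> {1..n} \<times> {1..n}" and R: "\<rho> \<subseteq> {1..m} \<times> {1..m}" and g: "g \<in> UT (n + m)"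
  shows "offdiag_supp g \<subseteq> ordsum n m \<pi> \<rho> \<longleftrightarrow>
    offdiag_supp (diag_block 0 n g) \<subseteq> \<pi> \<and> offdiag_supp (diag_block n m g) \<subseteq> \<rho>"
proof
  assume supp: "offdiag_supp g \<subseteq> ordsum n m \<pi> \<rho>"
  have "(i, j) \<in> \<pi>" if "i \<noteq> j" "i \<in> {1..n}" "j \<in> {1..n}" "g i j \<noteq> 0" for i j
  proof -
    have "(i, j) \<in> ordsum n m \<pi> \<rho>"
      using supp that by (auto simp: offdiag_supp_def)
    then show ?thesis
      using mem_ordsum_iff[OF R] that(3) by auto
  qed
  moreover have "(i, j) \<in> \<rho>" if "i \<noteq> j" "i \<in> {1..m}" "j \<in> {1..m}" "g (i + n) (j + n) \<noteq> 0" for i j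
  proof -
    have "(i + n, j + n) \<in> ordsum n m \<pi> \<rho>"
      using supp that by (auto simp: offdiag_supp_def)
    then show ?thesis
      using mem_ordsum_iff[OF R] P that(2) by auto
  qed
  ultimately show "offdiag_supp (diag_block 0 n g) \<subseteq> \<pi> \<and> offdiag_supp (diag_block n m g) \<subseteq> \<rho>"
    by (auto simp: offdiag_supp_def diag_block_def split: if_splits)
qed (use offdiag_supp_subset_ordsumI[OF R g] in blast)

lemma diag_blocks_of_factor:
  assumes x: "x \<in> UT n" and y: "y \<in> UT m" and r: "r \<in> UR (n + m) {1..n}"
    and g: "g = mmul (n + m) (embed (n + m) {1..n} x y) r"
  shows "x = diag_block 0 n g" "y = diag_block n m g"
proof -
  let ?l = "embed (n + m) {1..n} x y"
  have l: "?l \<in> UT (n + m)" "block_diag ?l {1..n}"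
    using embed_UT[of "{1..n}" "n + m" x y] block_diag_embed[of "{1..n}" "n + m"] x y by auto
  have off: "g i j = ?l i j" if "\<not> (i \<in> {1..n} \<and> j \<in> {1..n + m} - {1..n})" for i j
    unfolding g using mmul_block_diag_UR_off_block[OF l r that] .
  have "diag_block 0 n ?l = diag_block 0 n g"
    by (rule diag_block_cong) (use off in simp)
  then show "x = diag_block 0 n g"
    using diag_block_embed_Icc(1)[OF x y] by simp
  have "diag_block n m ?l = diag_block n m g"
    by (rule diag_block_cong) (use off in simp)
  then show "y = diag_block n m g"
    using diag_block_embed_Icc(2)[OF x y] by simp
qed

lemma factor_embed_Icc_UR_iff:
  fixes g :: "'a::{finite,field} mat"
  assumes g: "g \<in> UT (n + m)"
  obtains r0 where "r0 \<in> UR (n + m) {1..n}"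
    "\<And>x y r :: 'a mat. x \<in> UT n \<Longrightarrow> y \<in> UT m \<Longrightarrow> r \<in> UR (n + m) {1..n} \<Longrightarrow>
      g = mmul (n + m) (embed (n + m) {1..n} x y) r \<longleftrightarrow>
      x = diag_block 0 n g \<and> y = diag_block n m g \<and> r = r0"
proof -
  let ?l0 = "embed (n + m) {1..n} (diag_block 0 n g) (diag_block n m g)"
  have "diag_block 0 n g \<in> UT n" "diag_block n m g \<in> UT m"
    using diag_block_UT[OF g] by simp_all
  then have l0: "?l0 \<in> UT (n + m)" "block_diag ?l0 {1..n}"
    using embed_UT[of "{1..n}" "n + m"] block_diag_embed[of "{1..n}" "n + m"] by simp_all
  have "{1..n} \<subseteq> {1..n + m}"
    by auto
  then obtain r0 where r0: "r0 \<in> UR (n + m) {1..n}" "mmul (n + m) ?l0 r0 = g"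
    using ex_UR_factor[OF _ l0 g embed_Icc_diag_blocks[OF g]] by blast
  show thesis
  proof (rule that[OF r0(1)])
    fix x y r :: "'a mat"
    assume x: "x \<in> UT n" and y: "y \<in> UT m" and r: "r \<in> UR (n + m) {1..n}"
    show "g = mmul (n + m) (embed (n + m) {1..n} x y) r \<longleftrightarrow>
      x = diag_block 0 n g \<and> y = diag_block n m g \<and> r = r0"
    proof
      assume factor: "g = mmul (n + m) (embed (n + m) {1..n} x y) r"
      note blocks = diag_blocks_of_factor[OF x y r factor]
      have "mmul (n + m) ?l0 r = mmul (n + m) (embed (n + m) {1..n} x y) r"
        unfolding blocks ..
      also have "\<dots> = mmul (n + m) ?l0 r0"
        using factor r0(2) by simp
      finally have "r = r0"
        using inj_onD[OF inj_on_mmul_UR[OF _ l0(1)] _ r r0(1)] by simp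
      with blocks show "x = diag_block 0 n g \<and> y = diag_block n m g \<and> r = r0"
        by simp
    next
      assume "x = diag_block 0 n g \<and> y = diag_block n m g \<and> r = r0"
      then show "g = mmul (n + m) (embed (n + m) {1..n} x y) r"
        using r0(2) by simp
    qed
  qed
qed

lemma sum3_if_eq:
  assumes "finite A" "finite B" "finite C" "a \<in> A" "b \<in> B" "c \<in> C"
  shows "(\<Sum>x\<in>A. \<Sum>y\<in>B. \<Sum>z\<in>C. if x = a \<and> y = b \<and> z = c then v else 0) = v"
proof -
  have "(\<Sum>z\<in>C. if x = a \<and> y = b \<and> z = c then v else 0) = (if x = a \<and> y = b then v else 0)" for x y
    using assms(3,6) by (cases "x = a \<and> y = b") auto
  moreover have "(\<Sum>y\<in>B. if x = a \<and> y = b then v else 0) = (if x = a then v else 0)" for x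
    using assms(2,5) by (cases "x = a") auto
  ultimately show ?thesis
    using assms(1,4) by simp
qed

lemma cf_mult_delta:
  fixes g :: "'a::{finite,field} mat"
  assumes P: "\<pi> \<in> NO n" and R: "\<rho> \<in> NO m"
  shows "cf_mult n m (\<lambda>x y. delta n \<pi> x * delta m \<rho> y) g = delta (n + m) (ordsum n m \<pi> \<rho>) g"
proof (cases "g \<in> UT (n + m)")
  case False
  have "mmul (n + m) (embed (n + m) {1..n} x y) r \<in> UT (n + m)"
    if "x \<in> UT n" "y \<in> UT m" "r \<in> UR (n + m) {1..n}" for x y r :: "'a mat"
    using that embed_UT[of "{1..n}" "n + m" x y] by (simp add: mmul_UT UR_UT)
  then show ?thesis
    unfolding cf_mult_def using False by (auto simp: delta_eq intro!: sum.neutral)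
next
  case True
  obtain r0 where r0: "r0 \<in> UR (n + m) {1..n}" and factor:
    "\<And>x y r :: 'a mat. x \<in> UT n \<Longrightarrow> y \<in> UT m \<Longrightarrow> r \<in> UR (n + m) {1..n} \<Longrightarrow>
      g = mmul (n + m) (embed (n + m) {1..n} x y) r \<longleftrightarrow>
      x = diag_block 0 n g \<and> y = diag_block n m g \<and> r = r0"
    using factor_embed_Icc_UR_iff[OF True] by blast
  have blocks: "diag_block 0 n g \<in> UT n" "diag_block n m g \<in> UT m"
    using diag_block_UT[OF True] by simp_all
  have "cf_mult n m (\<lambda>x y. delta n \<pi> x * delta m \<rho> y) g
      = (\<Sum>x\<in>UT n. \<Sum>y\<in>UT m. \<Sum>r\<in>UR (n + m) {1..n}.
          if x = diag_block 0 n g \<and> y = diag_block n m g \<and> r = r0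
          then delta n \<pi> (diag_block 0 n g) * delta m \<rho> (diag_block n m g) else 0)"
    unfolding cf_mult_def
  proof (intro sum.cong refl)
    fix x y r :: "'a mat"
    assume "x \<in> UT n" "y \<in> UT m" "r \<in> UR (n + m) {1..n}"
    show "(if g = mmul (n + m) (embed (n + m) {1..n} x y) r then delta n \<pi> x * delta m \<rho> y else 0)
      = (if x = diag_block 0 n g \<and> y = diag_block n m g \<and> r = r0
         then delta n \<pi> (diag_block 0 n g) * delta m \<rho> (diag_block n m g) else 0)"
      by (rule if_cong[OF factor[OF \<open>x \<in> UT n\<close> \<open>y \<in> UT m\<close> \<open>r \<in> UR (n + m) {1..n}\<close>]]) auto
  qed
  also have "\<dots> = delta n \<pi> (diag_block 0 n g) * delta m \<rho> (diag_block n m g)"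
    by (rule sum3_if_eq[OF finite_UT finite_UT finite_UR blocks r0])
  also have "\<dots> = delta (n + m) (ordsum n m \<pi> \<rho>) g"
    using offdiag_supp_subset_ordsum_iff[OF NO_subset[OF P] NO_subset[OF R] True] blocks True
    by (simp add: delta_eq)
  finally show ?thesis .
qed

section \<open>Injectivity\<close>

definition pattern_mat :: "(nat \<times> nat) set \<Rightarrow> 'a::zero_neq_one mat" where
  "pattern_mat \<pi> = (\<lambda>i j. if (i, j) \<in> \<pi> then 1 else 0)"

lemma pattern_mat_UT:
  assumes "\<pi> \<in> NO n"
  shows "pattern_mat \<pi> \<in> UT n"
proof (rule UT_I)
  fix i j
  assume "pattern_mat \<pi> i j \<noteq> 0"
  then have "(i, j) \<in> \<pi>"
    by (simp add: pattern_mat_def split: if_splits)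
  then show "1 \<le> i \<and> i \<le> j \<and> j \<le> n"
    using NO_subset[OF assms] NO_le[OF assms] by auto
next
  fix i
  assume "1 \<le> i" "i \<le> n"
  then show "pattern_mat \<pi> i i = 1"
    using NO_refl[OF assms, of i] by (simp add: pattern_mat_def)
qed

lemma delta_pattern_mat:
  assumes P: "\<pi> \<in> NO n" and R: "\<rho> \<in> NO n"
  shows "delta n \<rho> (pattern_mat \<pi> :: 'a::field mat) = (if \<pi> \<subseteq> \<rho> then 1 else 0)"
proof -
  have "offdiag_supp (pattern_mat \<pi> :: 'a mat) = \<pi> - Id"
    by (auto simp: offdiag_supp_def pattern_mat_def)
  moreover have "\<pi> - Id \<subseteq> \<rho> \<longleftrightarrow> \<pi> \<subseteq> \<rho>"
  proof
    assume offdiag: "\<pi> - Id \<subseteq> \<rho>"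
    show "\<pi> \<subseteq> \<rho>"
    proof (clarify)
      fix a b
      assume ab: "(a, b) \<in> \<pi>"
      show "(a, b) \<in> \<rho>"
      proof (cases "a = b")
        case True
        then have "a \<in> {1..n}"
          using NO_subset[OF P] ab by auto
        then show ?thesis
          using NO_refl[OF R] True by simp
      next
        case False
        then show ?thesis
          using offdiag ab by auto
      qed
    qed
  qed auto
  moreover have "(pattern_mat \<pi> :: 'a mat) \<in> UT n"
    by (rule pattern_mat_UT[OF P])
  ultimately show ?thesis
    by (simp add: delta_eq)
qed

lemma delta_linear_independent:
  fixes d :: "(nat \<times> nat) set \<Rightarrow> complex"
  assumes zero: "\<And>g :: 'a::field mat. (\<Sum>\<pi>\<in>NO n. d \<pi> * delta n \<pi> g) = 0"
  shows "\<forall>\<pi>\<in>NO n. d \<pi> = 0"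
proof (rule ccontr)
  let ?S = "{\<pi> \<in> NO n. d \<pi> \<noteq> 0}"
  assume "\<not> (\<forall>\<pi>\<in>NO n. d \<pi> = 0)"
  then have "?S \<noteq> {}"
    by blast
  then obtain \<pi>0 where \<pi>0: "\<pi>0 \<in> ?S" and maximal: "\<forall>\<rho>\<in>?S. \<pi>0 \<subseteq> \<rho> \<longrightarrow> \<pi>0 = \<rho>"
    using finite_has_maximal[of ?S] finite_NO by auto
  then have \<pi>0_NO: "\<pi>0 \<in> NO n"
    by simp
  have "d \<rho> * delta n \<rho> (pattern_mat \<pi>0 :: 'a mat) = (if \<rho> = \<pi>0 then d \<pi>0 else 0)"
    if \<rho>: "\<rho> \<in> NO n" for \<rho>
  proof (cases "\<rho> = \<pi>0")
    case True
    then show ?thesis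
      using delta_pattern_mat[OF \<pi>0_NO \<rho>, where 'a = 'a] by simp
  next
    case False
    then have "d \<rho> = 0 \<or> \<not> \<pi>0 \<subseteq> \<rho>"
      using maximal \<rho> by blast
    then show ?thesis
      using delta_pattern_mat[OF \<pi>0_NO \<rho>, where 'a = 'a] \<pi>0 False by auto
  qed
  then have "(\<Sum>\<rho>\<in>NO n. d \<rho> * delta n \<rho> (pattern_mat \<pi>0 :: 'a mat)) = d \<pi>0"
    using \<pi>0 finite_NO by simp
  then show False
    using zero \<pi>0 by simp
qed

lemma inj_on_phi: "inj_on (phi :: _ \<Rightarrow> nat \<Rightarrow> 'a::field mat \<Rightarrow> complex) IG_elems"
proof (rule inj_onI)
  fix c c'
  assume c: "c \<in> IG_elems" and c': "c' \<in> IG_elems"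
    and eq: "(phi c :: nat \<Rightarrow> 'a mat \<Rightarrow> complex) = phi c'"
  have "c (n, \<pi>) = c' (n, \<pi>)" for n \<pi>
  proof (cases "\<pi> \<in> NO n")
    case False
    then have "c (n, \<pi>) = 0" "c' (n, \<pi>) = 0"
      using c c' unfolding IG_elems_def by auto
    then show ?thesis
      by simp
  next
    case True
    have "(\<Sum>\<rho>\<in>NO n. (c (n, \<rho>) - c' (n, \<rho>)) * delta n \<rho> g) = 0" for g :: "'a mat"
      using fun_cong[OF fun_cong[OF eq, of n], of g]
      by (simp add: phi_def left_diff_distrib sum_subtractf)
    then show ?thesis
      using delta_linear_independent True by fastforce
  qed
  then show "c = c'"
    by auto
qed

section \<open>Unit and counit\<close>

lemma delta_0: "delta 0 \<pi> = (\<lambda>g. if g \<in> UT 0 then 1 else 0)"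
proof -
  have "offdiag_supp g = {}" if "g \<in> UT 0" for g :: "'a::field mat"
    using UT_nz[OF that] by (auto simp: offdiag_supp_def)
  then show ?thesis
    by (simp add: delta_eq fun_eq_iff)
qed

lemma zero_mat_UT_0: "(\<lambda>i j. 0) \<in> UT 0"
  by (rule UT_I) auto

theorem theorem7p5:
  fixes q :: nat
  defines "q \<equiv> card (UNIV :: ('a::{finite,field}) set)"
  shows
    \<comment> \<open>the map lands in cf(UT_bullet)\<close>
    "(\<forall>n. \<forall>\<pi>\<in>NO n. (delta n \<pi> :: 'a mat \<Rightarrow> complex) \<in> cf n)
     \<comment> \<open>unit\<close>
     \<and> (\<forall>\<pi>\<in>NO 0. (delta 0 \<pi> :: 'a mat \<Rightarrow> complex) = (\<lambda>g. if g \<in> UT 0 then 1 else 0))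
     \<comment> \<open>counit\<close>
     \<and> (\<forall>\<pi>\<in>NO 0. (delta 0 \<pi> :: 'a mat \<Rightarrow> complex) (\<lambda>i j. 0) = 1)
     \<comment> \<open>multiplicativity\<close>
     \<and> (\<forall>n m \<pi> \<rho>. \<pi> \<in> NO n \<longrightarrow> \<rho> \<in> NO m \<longrightarrow>
          cf_mult n m (\<lambda>x y. (delta n \<pi> :: 'a mat \<Rightarrow> complex) x * delta m \<rho> y)
          = delta (n + m) (ordsum n m \<pi> \<rho>))
     \<comment> \<open>comultiplicativity, componentwise in cf(UT_a) (x) cf(UT_(n-a))\<close>
     \<and> (\<forall>n a \<pi>. \<pi> \<in> NO n \<longrightarrow> a \<le> n \<longrightarrow>
          (\<forall>x\<in>UT a. \<forall>y\<in>UT (n - a).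
             cf_coprod n a (delta n \<pi> :: 'a mat \<Rightarrow> complex) x y
             = (\<Sum>I\<in>{I. I \<subseteq> {1..n} \<and> card I = a}.
                  (1 / of_nat q) ^ asc n I \<pi> *
                  delta a (restr_sh I \<pi>) x * delta (n - a) (restr_sh ({1..n} - I) \<pi>) y)))
     \<comment> \<open>injectivity\<close>
     \<and> inj_on (phi :: _ \<Rightarrow> nat \<Rightarrow> 'a mat \<Rightarrow> complex) IG_elems"
proof (intro conjI allI ballI impI)
  fix n \<pi>
  assume "\<pi> \<in> NO n"
  then show "(delta n \<pi> :: 'a mat \<Rightarrow> complex) \<in> cf n"
    by (rule delta_in_cf)
next
  fix n m \<pi> \<rho>
  assume "\<pi> \<in> NO n" "\<rho> \<in> NO m"
  then show "cf_mult n m (\<lambda>x y. (delta n \<pi> :: 'a mat \<Rightarrow> complex) x * delta m \<rho> y)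
    = delta (n + m) (ordsum n m \<pi> \<rho>)"
    using cf_mult_delta by blast
next
  fix n a \<pi> x y
  assume "x \<in> (UT a :: 'a mat set)" "y \<in> (UT (n - a) :: 'a mat set)"
  then show "cf_coprod n a (delta n \<pi>) x y
    = (\<Sum>I\<in>{I. I \<subseteq> {1..n} \<and> card I = a}. (1 / of_nat q) ^ asc n I \<pi>
        * delta a (restr_sh I \<pi>) x * delta (n - a) (restr_sh ({1..n} - I) \<pi>) y)"
    unfolding q_def by (rule cf_coprod_delta)
qed (simp_all add: delta_0 zero_mat_UT_0 inj_on_phi)

end
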